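(* Let $\gamma\in\mathcal S_n$ and $\sigma=(\varepsilon,\varepsilon,\gamma;(123))$. Fix a positive integer $d$, and let $r$ be the number of cycles of $\gamma$ of length $d$. Suppose there do not exist lengths $d',d''$ of cycles of $\gamma$ (not necessarily distinct cycles) with $d\notin\{d',d''\}$ and $\operatorname{lcm}(d,d')=\operatorname{lcm}(d,d'')=\operatorname{lcm}(d',d'')$. Then $\sigma\notin\mathrm{Par}(n)$ if either <ul> <li>(i) $r=1$ and $n+d\equiv1\pmod3$, or</li> <li>(ii) $3\mid d$ and $3\nmid nr$.</li> </ul>
   Context: A Latin square of order $n$ is an $n\times n$ array with rows, columns and symbols indexed by $[n]$, each symbol occurring once in each row and each column, with triple set $O(L)$. Permutations act on the right; $\varepsilon$ is the identity; fixed points count as cycles of length $1$. A paratopism $(\alpha,\beta,\gamma;(123))$ maps $L$ to $L^\sigma$ with triple set $\{(z\gamma,x\alpha,y\beta):(x,y,z)\in O(L)\}$; it is an autoparatopism of $L$ if $L^\sigma=L$. $\mathrm{Par}(n)$ is the set of paratopisms that are autoparatopisms of at least one Latin square of order $n$. *)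

theory Defs
  imports "HOL-Combinatorics.Permutations"
begin

definition latin_square :: "nat \<Rightarrow> (nat \<Rightarrow> nat \<Rightarrow> nat) \<Rightarrow> bool" where
  "latin_square n L \<longleftrightarrow>
     (\<forall>x<n. \<forall>y<n. L x y < n) \<and>
     (\<forall>x<n. inj_on (\<lambda>y. L x y) {..<n}) \<and>
     (\<forall>y<n. inj_on (\<lambda>x. L x y) {..<n})"

definition triples :: "nat \<Rightarrow> (nat \<Rightarrow> nat \<Rightarrow> nat) \<Rightarrow> (nat \<times> nat \<times> nat) set" where
  "triples n L = {(x, y, L x y) | x y. x < n \<and> y < n}"

text \<open>Image of L under the paratopism (alpha, beta, gamma; (123)):
  triple set {(z gamma, x alpha, y beta) : (x,y,z) in O(L)} (maps act on the right,
  i.e. z gamma = gamma z).\<close>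

definition para123_image ::
  "(nat \<Rightarrow> nat) \<Rightarrow> (nat \<Rightarrow> nat) \<Rightarrow> (nat \<Rightarrow> nat) \<Rightarrow> nat \<Rightarrow> (nat \<Rightarrow> nat \<Rightarrow> nat)
     \<Rightarrow> (nat \<times> nat \<times> nat) set" where
  "para123_image \<alpha> \<beta> \<gamma> n L = {(\<gamma> z, \<alpha> x, \<beta> y) | x y z. (x, y, z) \<in> triples n L}"

definition is_autoparatopism123 ::
  "nat \<Rightarrow> (nat \<Rightarrow> nat) \<Rightarrow> (nat \<Rightarrow> nat) \<Rightarrow> (nat \<Rightarrow> nat) \<Rightarrow> (nat \<Rightarrow> nat \<Rightarrow> nat) \<Rightarrow> bool" where
  "is_autoparatopism123 n \<alpha> \<beta> \<gamma> L \<longleftrightarrow> para123_image \<alpha> \<beta> \<gamma> n L = triples n L"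

definition in_Par123 :: "nat \<Rightarrow> (nat \<Rightarrow> nat) \<Rightarrow> (nat \<Rightarrow> nat) \<Rightarrow> (nat \<Rightarrow> nat) \<Rightarrow> bool" where
  "in_Par123 n \<alpha> \<beta> \<gamma> \<longleftrightarrow>
     \<alpha> permutes {..<n} \<and> \<beta> permutes {..<n} \<and> \<gamma> permutes {..<n} \<and>
     (\<exists>L. latin_square n L \<and> is_autoparatopism123 n \<alpha> \<beta> \<gamma> L)"

text \<open>Cycles of a permutation: its orbits (fixed points are cycles of length 1).\<close>

definition cyc :: "(nat \<Rightarrow> nat) \<Rightarrow> nat \<Rightarrow> nat set" where
  "cyc g x = {(g ^^ k) x | k. True}"

definition cycle_lengths :: "nat \<Rightarrow> (nat \<Rightarrow> nat) \<Rightarrow> nat set" where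
  "cycle_lengths n g = {card (cyc g x) | x. x < n}"

definition num_cycles_of_length :: "nat \<Rightarrow> (nat \<Rightarrow> nat) \<Rightarrow> nat \<Rightarrow> nat" where
  "num_cycles_of_length n g d = card {cyc g x | x. x < n \<and> card (cyc g x) = d}"

end

theory Submission
  imports Defs "HOL-Combinatorics.Orbits"
begin

text \<open>The autoparatopism \<open>\<sigma> = (\<epsilon>, \<epsilon>, \<gamma>; (123))\<close> has cube \<open>(\<gamma>, \<gamma>, \<gamma>; \<epsilon>)\<close>, so \<open>\<gamma>\<close> is an
  automorphism of \<open>L\<close> and the cycle lengths \<open>a, b, c\<close> of \<open>x\<close>, \<open>y\<close>, \<open>L x y\<close> satisfy
  \<open>lcm a b = lcm a c = lcm b c\<close>. The hypothesis on the cycle lengths then says: if \<open>x\<close> lies on a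
  \<open>d\<close>-cycle and \<open>y\<close> does not, then \<open>L x y\<close> lies on a \<open>d\<close>-cycle. Let \<open>P\<close> be the set of the
  \<open>m = d r\<close> points on \<open>d\<close>-cycles. Counting row by row, the set \<open>E\<close> of cells \<open>(x, y) \<in> P \<times> P\<close>
  with \<open>L x y \<in> P\<close> has \<open>m (2 m - n)\<close> elements. The map \<open>(x, y) \<mapsto> (\<gamma> (L x y), x)\<close> induced by \<open>\<sigma>\<close>
  permutes \<open>E\<close> and its cube is \<open>\<gamma> \<times> \<gamma>\<close>, so its orbits on \<open>E\<close> have length \<open>3 d\<close> or \<open>d\<close>. There
  are no orbits of length \<open>d\<close> if \<open>3 dvd d\<close>, and at most \<open>r\<close> of them otherwise, since such an
  orbit is determined by a first coordinate. Hence \<open>|E| = d (3 q + e)\<close> with \<open>e \<le> r\<close>, and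
  \<open>3 q + e = r (2 d r - n)\<close> is impossible modulo 3 under either hypothesis (i) or (ii).\<close>

lemma in_orbit_if_funpow_eq_self:
  assumes "(f ^^ p) x = x" "0 < p"
  shows "x \<in> orbit f x"
  unfolding orbit_altdef using assms by force

lemma orbit_eq_if_in_orbit:
  assumes "x \<in> orbit f x" "y \<in> orbit f x"
  shows "orbit f y = orbit f x"
  using assms by (blast intro: orbit_swap orbit_trans)

lemma card_orbit_eq_funpow_dist1:
  assumes "x \<in> orbit f x"
  shows "card (orbit f x) = funpow_dist1 f x x"
  using card_image[OF inj_on_funpow_dist1[OF assms]] orbit_conv_funpow_dist1[OF assms] by simp

lemma funpow_eq_self_iff_card_orbit_dvd:
  assumes "x \<in> orbit f x"
  shows "(f ^^ k) x = x \<longleftrightarrow> card (orbit f x) dvd k"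
proof -
  let ?p = "funpow_dist1 f x x"
  have "(f ^^ k) x = (f ^^ (k mod ?p)) x"
    using funpow_mod_eq[OF funpow_dist1_prop[OF assms]] by simp
  moreover have "(f ^^ (k mod ?p)) x = x \<longleftrightarrow> k mod ?p = 0"
    using funpow_dist1_least[of "k mod ?p" f x x] by (cases "k mod ?p = 0") auto
  ultimately show ?thesis
    by (simp add: card_orbit_eq_funpow_dist1[OF assms] dvd_eq_mod_eq_0)
qed

lemma card_points_on_orbits_of_card:
  assumes "finite B" "f ` B \<subseteq> B" "\<And>x. x \<in> B \<Longrightarrow> x \<in> orbit f x"
  shows "card {x \<in> B. card (orbit f x) = N}
           = N * card {orbit f x | x. x \<in> B \<and> card (orbit f x) = N}"
proof -
  let ?C = "{orbit f x | x. x \<in> B \<and> card (orbit f x) = N}"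
  have orbit_subset: "orbit f x \<subseteq> B" if "x \<in> B" for x
  proof
    fix y assume "y \<in> orbit f x"
    then show "y \<in> B" by induction (use that assms(2) in auto)
  qed
  have same_orbit: "orbit f y = orbit f x" if "x \<in> B" "y \<in> orbit f x" for x y
    using orbit_eq_if_in_orbit[OF assms(3)[OF that(1)] that(2)] .
  have union: "\<Union>?C = {x \<in> B. card (orbit f x) = N}"
  proof
    show "\<Union>?C \<subseteq> {x \<in> B. card (orbit f x) = N}"
    proof
      fix y assume "y \<in> \<Union>?C"
      then obtain x where x: "x \<in> B" "card (orbit f x) = N" "y \<in> orbit f x" by blast
      then show "y \<in> {x \<in> B. card (orbit f x) = N}"
        using orbit_subset[OF x(1)] same_orbit[OF x(1,3)] by auto
    qed
    show "{x \<in> B. card (orbit f x) = N} \<subseteq> \<Union>?C"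
    proof
      fix x assume "x \<in> {x \<in> B. card (orbit f x) = N}"
      then show "x \<in> \<Union>?C" using assms(3) by (auto intro!: UnionI[of "orbit f x"])
    qed
  qed
  have disjoint: "c1 \<inter> c2 = {}" if "c1 \<in> ?C" "c2 \<in> ?C" "c1 \<noteq> c2" for c1 c2
    using that same_orbit by blast
  have "finite ?C"
    by (rule finite_subset[of _ "Pow B"]) (use orbit_subset assms(1) in auto)
  then have "N * card ?C = card (\<Union>?C)"
    by (rule card_partition) (use union assms(1) disjoint in auto)
  then show ?thesis using union by simp
qed

lemma cyc_eq_orbit:
  assumes "x \<in> orbit f x"
  shows "cyc f x = orbit f x"
  unfolding cyc_def orbit_altdef_self_in[OF assms] ..

lemma latin_square_row_bij:
  assumes "latin_square n L" "x < n"
  shows "bij_betw (L x) {..<n} {..<n}"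
proof -
  have "inj_on (L x) {..<n}" "L x ` {..<n} \<subseteq> {..<n}"
    using assms unfolding latin_square_def by auto
  then show ?thesis by (simp add: bij_betw_def endo_inj_surj)
qed

lemma latin_square_card_row_in:
  assumes "latin_square n L" "D \<subseteq> {..<n}" "x < n"
    and closed: "\<And>y. y < n \<Longrightarrow> y \<notin> D \<Longrightarrow> L x y \<in> D"
  shows "card {y \<in> D. L x y \<in> D} + (n - card D) = card D"
proof -
  have "finite D" using assms(2) finite_subset by blast
  have bij: "bij_betw (L x) {..<n} {..<n}" using latin_square_row_bij assms(1,3) .
  let ?in = "{y \<in> D. L x y \<in> D}" and ?out = "{y \<in> D. L x y \<notin> D}"
  have out_eq: "?out = {y. y < n \<and> L x y \<notin> D}"
    using assms(2) closed by auto
  then have "L x ` ?out = {..<n} - D"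
    using bij unfolding bij_betw_def by auto
  then have "bij_betw (L x) ?out ({..<n} - D)"
    using bij_betw_subset[OF bij, of ?out] out_eq by auto
  then have "card ?out = n - card D"
    using bij_betw_same_card card_Diff_subset[OF \<open>finite D\<close> assms(2)] by fastforce
  moreover have "card (?in \<union> ?out) = card ?in + card ?out"
    by (rule card_Un_disjoint) (use \<open>finite D\<close> in auto)
  moreover have "?in \<union> ?out = D" by auto
  ultimately show ?thesis by simp
qed

lemma latin_square_card_closed_entries:
  assumes "latin_square n L" "D \<subseteq> {..<n}"
    and closed: "\<And>x y. x \<in> D \<Longrightarrow> y < n \<Longrightarrow> y \<notin> D \<Longrightarrow> L x y \<in> D"
  shows "card {(x, y). x \<in> D \<and> y \<in> D \<and> L x y \<in> D} + card D * (n - card D) = card D * card D"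
proof -
  have "finite D" using assms(2) finite_subset by blast
  have "{(x, y). x \<in> D \<and> y \<in> D \<and> L x y \<in> D} = Sigma D (\<lambda>x. {y \<in> D. L x y \<in> D})"
    by auto
  then have "card {(x, y). x \<in> D \<and> y \<in> D \<and> L x y \<in> D} + card D * (n - card D)
      = (\<Sum>x\<in>D. card {y \<in> D. L x y \<in> D} + (n - card D))"
    using \<open>finite D\<close> by (simp add: sum.distrib)
  also have "\<dots> = (\<Sum>x\<in>D. card D)"
    using latin_square_card_row_in[OF assms(1,2)] closed assms(2) by (intro sum.cong) auto
  finally show ?thesis by simp
qed

locale autoparatopic_latin_square =
  fixes n :: nat and \<gamma> :: "nat \<Rightarrow> nat" and L :: "nat \<Rightarrow> nat \<Rightarrow> nat"
  assumes permutes: "\<gamma> permutes {..<n}"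
    and latin: "latin_square n L"
    and autoparatopic: "\<And>x y. x < n \<Longrightarrow> y < n \<Longrightarrow> L (\<gamma> (L x y)) x = y"

lemma autoparatopic_latin_squareI:
  assumes "\<gamma> permutes {..<n}" "latin_square n L" "is_autoparatopism123 n id id \<gamma> L"
  shows "autoparatopic_latin_square n \<gamma> L"
proof
  fix x y assume "x < n" "y < n"
  then have "(\<gamma> (L x y), x, y) \<in> para123_image id id \<gamma> n L"
    unfolding para123_image_def triples_def by auto
  then show "L (\<gamma> (L x y)) x = y"
    using assms(3) unfolding is_autoparatopism123_def triples_def by auto
qed (use assms in auto)

context autoparatopic_latin_square
begin

lemma L_less: "x < n \<Longrightarrow> y < n \<Longrightarrow> L x y < n"
  using latin unfolding latin_square_def by blast

lemma L_cancel_left: "x < n \<Longrightarrow> y < n \<Longrightarrow> y' < n \<Longrightarrow> L x y = L x y' \<Longrightarrow> y = y'"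
  using latin unfolding latin_square_def inj_on_def by blast

lemma L_cancel_right: "x < n \<Longrightarrow> x' < n \<Longrightarrow> y < n \<Longrightarrow> L x y = L x' y \<Longrightarrow> x = x'"
  using latin unfolding latin_square_def inj_on_def by blast

lemma funpow_gamma_less: "x < n \<Longrightarrow> (\<gamma> ^^ k) x < n"
  using permutes_in_funpow_image[OF permutes, of x k] by simp

lemma gamma_less: "x < n \<Longrightarrow> \<gamma> x < n"
  using funpow_gamma_less[of x 1] by simp

lemma in_orbit_gamma: "x \<in> orbit \<gamma> x"
  using permutation_self_in_orbit permutes_imp_permutation[OF finite_lessThan permutes] .

lemma L_gamma_L_gamma: "x < n \<Longrightarrow> y < n \<Longrightarrow> L (\<gamma> y) (\<gamma> (L x y)) = x"
  using autoparatopic[of "\<gamma> (L x y)" x] autoparatopic[of x y] L_less gamma_less by simp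

text \<open>Applying \<open>\<sigma>\<close> three times gives the autotopism \<open>(\<gamma>, \<gamma>, \<gamma>)\<close>.\<close>

lemma L_gamma: "x < n \<Longrightarrow> y < n \<Longrightarrow> L (\<gamma> x) (\<gamma> y) = \<gamma> (L x y)"
  using L_gamma_L_gamma[of "\<gamma> (L x y)" x] autoparatopic[of x y] L_less gamma_less by simp

lemma L_funpow_gamma:
  "x < n \<Longrightarrow> y < n \<Longrightarrow> L ((\<gamma> ^^ k) x) ((\<gamma> ^^ k) y) = (\<gamma> ^^ k) (L x y)"
  by (induction k) (simp_all add: L_gamma funpow_gamma_less)

lemma funpow_gamma_eq_self_iff: "(\<gamma> ^^ k) x = x \<longleftrightarrow> card (orbit \<gamma> x) dvd k"
  using funpow_eq_self_iff_card_orbit_dvd[OF in_orbit_gamma] .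

lemma lcm_card_orbits:
  assumes "x < n" "y < n"
  defines "a \<equiv> card (orbit \<gamma> x)" and "b \<equiv> card (orbit \<gamma> y)" and "c \<equiv> card (orbit \<gamma> (L x y))"
  shows "lcm a b = lcm a c" "lcm a c = lcm b c"
proof -
  have c_dvd: "c dvd lcm a b"
  proof -
    have "(\<gamma> ^^ lcm a b) x = x" "(\<gamma> ^^ lcm a b) y = y"
      by (simp_all add: funpow_gamma_eq_self_iff a_def b_def)
    then have "(\<gamma> ^^ lcm a b) (L x y) = L x y"
      using L_funpow_gamma[OF assms(1,2), of "lcm a b"] by simp
    then show ?thesis unfolding c_def funpow_gamma_eq_self_iff .
  qed
  have a_dvd: "a dvd lcm b c"
  proof -
    have "(\<gamma> ^^ lcm b c) y = y" "(\<gamma> ^^ lcm b c) (L x y) = L x y"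
      by (simp_all add: funpow_gamma_eq_self_iff b_def c_def)
    then have "L ((\<gamma> ^^ lcm b c) x) y = L x y"
      using L_funpow_gamma[OF assms(1,2), of "lcm b c"] by simp
    then have "(\<gamma> ^^ lcm b c) x = x"
      using L_cancel_right[OF funpow_gamma_less[OF assms(1)] assms(1,2)] by simp
    then show ?thesis unfolding a_def funpow_gamma_eq_self_iff .
  qed
  have b_dvd: "b dvd lcm a c"
  proof -
    have "(\<gamma> ^^ lcm a c) x = x" "(\<gamma> ^^ lcm a c) (L x y) = L x y"
      by (simp_all add: funpow_gamma_eq_self_iff a_def c_def)
    then have "L x ((\<gamma> ^^ lcm a c) y) = L x y"
      using L_funpow_gamma[OF assms(1,2), of "lcm a c"] by simp
    then have "(\<gamma> ^^ lcm a c) y = y"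
      using L_cancel_left[OF assms(1) funpow_gamma_less[OF assms(2)] assms(2)] by simp
    then show ?thesis unfolding b_def funpow_gamma_eq_self_iff .
  qed
  show "lcm a b = lcm a c" "lcm a c = lcm b c"
    by (intro dvd_antisym lcm_least; simp add: a_dvd b_dvd c_dvd)+
qed

definition points_on_cycles :: "nat \<Rightarrow> nat set" where
  "points_on_cycles d = {x \<in> {..<n}. card (orbit \<gamma> x) = d}"

lemma points_on_cycles_subset: "points_on_cycles d \<subseteq> {..<n}"
  by (auto simp: points_on_cycles_def)

lemma card_points_on_cycles: "card (points_on_cycles d) = d * num_cycles_of_length n \<gamma> d"
proof -
  have "num_cycles_of_length n \<gamma> d = card {orbit \<gamma> x | x. x \<in> {..<n} \<and> card (orbit \<gamma> x) = d}"
    unfolding num_cycles_of_length_def cyc_eq_orbit[OF in_orbit_gamma] by simp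
  moreover have "card (points_on_cycles d)
      = d * card {orbit \<gamma> x | x. x \<in> {..<n} \<and> card (orbit \<gamma> x) = d}"
    unfolding points_on_cycles_def
    by (rule card_points_on_orbits_of_card) (auto simp: gamma_less in_orbit_gamma)
  ultimately show ?thesis by simp
qed

lemma gamma_in_points_on_cycles: "x \<in> points_on_cycles d \<Longrightarrow> \<gamma> x \<in> points_on_cycles d"
  unfolding points_on_cycles_def using self_in_orbit_step[OF in_orbit_gamma] gamma_less by simp

lemma L_in_points_on_cycles:
  assumes no_lcm: "\<not> (\<exists>d' \<in> cycle_lengths n \<gamma>. \<exists>d'' \<in> cycle_lengths n \<gamma>.
             d \<notin> {d', d''} \<and> lcm d d' = lcm d d'' \<and> lcm d d'' = lcm d' d'')"
    and "x \<in> points_on_cycles d" "y < n" "y \<notin> points_on_cycles d"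
  shows "L x y \<in> points_on_cycles d"
proof (rule ccontr)
  assume "L x y \<notin> points_on_cycles d"
  have "x < n" and d: "card (orbit \<gamma> x) = d"
    using assms(2) by (auto simp: points_on_cycles_def)
  let ?b = "card (orbit \<gamma> y)" and ?c = "card (orbit \<gamma> (L x y))"
  have "?b \<in> cycle_lengths n \<gamma>" "?c \<in> cycle_lengths n \<gamma>"
    using \<open>x < n\<close> \<open>y < n\<close> L_less unfolding cycle_lengths_def cyc_eq_orbit[OF in_orbit_gamma] by auto
  moreover have "d \<notin> {?b, ?c}"
    using \<open>L x y \<notin> points_on_cycles d\<close> assms(3,4) L_less[OF \<open>x < n\<close> \<open>y < n\<close>]
    by (auto simp: points_on_cycles_def)
  moreover have "lcm d ?b = lcm d ?c" "lcm d ?c = lcm ?b ?c"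
    using lcm_card_orbits[OF \<open>x < n\<close> \<open>y < n\<close>] d by simp_all
  ultimately show False using no_lcm by blast
qed

text \<open>The action of \<open>\<sigma>\<close> on the triple \<open>(x, y, L x y)\<close>, recorded by its first two entries.\<close>

definition entry_map :: "nat \<times> nat \<Rightarrow> nat \<times> nat" where
  "entry_map = (\<lambda>(x, y). (\<gamma> (L x y), x))"

lemma entry_map_cube: "x < n \<Longrightarrow> y < n \<Longrightarrow> (entry_map ^^ 3) (x, y) = (\<gamma> x, \<gamma> y)"
  by (simp add: numeral_3_eq_3 entry_map_def autoparatopic L_gamma_L_gamma L_less gamma_less)

lemma funpow_entry_map_mult3:
  "x < n \<Longrightarrow> y < n \<Longrightarrow> (entry_map ^^ (3 * k)) (x, y) = ((\<gamma> ^^ k) x, (\<gamma> ^^ k) y)"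
proof (induction k)
  case (Suc k)
  have "(entry_map ^^ (3 * Suc k)) (x, y) = (entry_map ^^ 3) ((entry_map ^^ (3 * k)) (x, y))"
    by (simp add: funpow_add)
  then show ?case using Suc entry_map_cube funpow_gamma_less by simp
qed simp

lemma snd_funpow_entry_map:
  "x < n \<Longrightarrow> y < n \<Longrightarrow> snd ((entry_map ^^ Suc (3 * k)) (x, y)) = (\<gamma> ^^ k) x"
  using funpow_entry_map_mult3 by (simp add: entry_map_def)

definition closed_entries :: "nat \<Rightarrow> (nat \<times> nat) set" where
  "closed_entries d = {(x, y). x \<in> points_on_cycles d \<and> y \<in> points_on_cycles d
                                 \<and> L x y \<in> points_on_cycles d}"

lemma closed_entries_subset: "closed_entries d \<subseteq> {..<n} \<times> {..<n}"
  by (auto simp: closed_entries_def points_on_cycles_def)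

lemma entry_map_closed_entries:
  assumes "(x, y) \<in> closed_entries d"
  shows "entry_map (x, y) \<in> closed_entries d"
proof -
  have "x \<in> points_on_cycles d" "y \<in> points_on_cycles d" "L x y \<in> points_on_cycles d"
    using assms by (auto simp: closed_entries_def)
  moreover have "L (\<gamma> (L x y)) x = y"
    using autoparatopic calculation by (simp add: points_on_cycles_def)
  ultimately show ?thesis
    by (simp add: closed_entries_def entry_map_def gamma_in_points_on_cycles)
qed

lemma funpow_entry_map_eq_self_imp:
  assumes "(x, y) \<in> closed_entries d" "(entry_map ^^ k) (x, y) = (x, y)"
  shows "d dvd k"
proof -
  have "x < n" "y < n" "card (orbit \<gamma> x) = d"
    using assms(1) by (auto simp: closed_entries_def points_on_cycles_def)
  have "(entry_map ^^ (3 * k)) (x, y) = (x, y)"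
    using funpow_mod_eq[OF assms(2), of "3 * k"] by simp
  then have "(\<gamma> ^^ k) x = x"
    using funpow_entry_map_mult3[OF \<open>x < n\<close> \<open>y < n\<close>] by simp
  then show ?thesis using funpow_gamma_eq_self_iff \<open>card (orbit \<gamma> x) = d\<close> by simp
qed

lemma funpow_entry_map_3d:
  assumes "(x, y) \<in> closed_entries d"
  shows "(entry_map ^^ (3 * d)) (x, y) = (x, y)"
proof -
  have "x < n" "y < n" "card (orbit \<gamma> x) = d" "card (orbit \<gamma> y) = d"
    using assms by (auto simp: closed_entries_def points_on_cycles_def)
  then show ?thesis using funpow_entry_map_mult3 funpow_gamma_eq_self_iff by simp
qed

lemma in_orbit_entry_map:
  assumes "t \<in> closed_entries d" "0 < d"
  shows "t \<in> orbit entry_map t"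
proof -
  obtain x y where "t = (x, y)" by fastforce
  then show ?thesis
    using in_orbit_if_funpow_eq_self[OF funpow_entry_map_3d] assms by simp
qed

lemma card_orbit_entry_map:
  assumes "t \<in> closed_entries d" "0 < d"
  shows "card (orbit entry_map t) = d \<or> card (orbit entry_map t) = 3 * d"
proof -
  let ?p = "card (orbit entry_map t)"
  note fixed_iff = funpow_eq_self_iff_card_orbit_dvd[OF in_orbit_entry_map[OF assms]]
  have "d dvd ?p"
    using funpow_entry_map_eq_self_imp[of "fst t" "snd t" d ?p] fixed_iff assms(1) by simp
  then obtain q where q: "?p = d * q" ..
  have "?p dvd 3 * d"
    using fixed_iff funpow_entry_map_3d[of "fst t" "snd t" d] assms(1) by simp
  then have "q dvd 3" using q assms(2) by (simp add: mult.commute)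
  moreover have "q \<le> 3" using \<open>q dvd 3\<close> by (simp add: dvd_imp_le)
  then have "q = 0 \<or> q = 1 \<or> q = 2 \<or> q = 3" by linarith
  ultimately have "q = 1 \<or> q = 3" by auto
  then show ?thesis using q by auto
qed

lemma card_orbit_entry_map_neq_if_3_dvd:
  assumes "t \<in> closed_entries d" "0 < d" "3 dvd d"
  shows "card (orbit entry_map t) \<noteq> d"
proof
  assume "card (orbit entry_map t) = d"
  then have fixed: "(entry_map ^^ d) t = t"
    using funpow_eq_self_iff_card_orbit_dvd[OF in_orbit_entry_map[OF assms(1,2)]] by simp
  obtain k where k: "d = 3 * k" using assms(3) ..
  obtain x y where t: "t = (x, y)" by fastforce
  have "x < n" "y < n" "card (orbit \<gamma> x) = d"
    using assms(1) t by (auto simp: closed_entries_def points_on_cycles_def)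
  then have "(\<gamma> ^^ k) x = x"
    using fixed funpow_entry_map_mult3 t k by simp
  then have "d dvd k" using funpow_gamma_eq_self_iff \<open>card (orbit \<gamma> x) = d\<close> by simp
  then show False using k assms(2) by (auto dest: dvd_imp_le)
qed

text \<open>A short orbit is determined by its first coordinate: one of \<open>d\<close>, \<open>2 d\<close> has the form
  \<open>3 k + 1\<close>, so \<open>entry_map ^^ (3 k + 1)\<close> fixes \<open>(x, y)\<close>, which forces \<open>y = (\<gamma> ^^ k) x\<close>.\<close>

lemma card_short_orbit_entries_le:
  assumes "\<not> 3 dvd d"
  shows "card {t \<in> closed_entries d. card (orbit entry_map t) = d} \<le> card (points_on_cycles d)"
proof -
  let ?S = "{t \<in> closed_entries d. card (orbit entry_map t) = d}"
  have "0 < d" using assms by (cases "d = 0") auto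
  have "\<exists>k. Suc (3 * k) = d \<or> Suc (3 * k) = 2 * d" using assms by presburger
  then obtain k where "d dvd Suc (3 * k)" by (metis dvd_refl dvd_triv_right)
  have snd_eq: "snd t = (\<gamma> ^^ k) (fst t)" if "t \<in> ?S" for t
  proof -
    obtain x y where t: "t = (x, y)" by fastforce
    have "x < n" "y < n" using that t by (auto simp: closed_entries_def points_on_cycles_def)
    have "t \<in> closed_entries d" "card (orbit entry_map t) = d" using that by auto
    then have "(entry_map ^^ Suc (3 * k)) t = t"
      using funpow_eq_self_iff_card_orbit_dvd[OF in_orbit_entry_map[OF _ \<open>0 < d\<close>]]
        \<open>d dvd Suc (3 * k)\<close> by metis
    then show ?thesis using snd_funpow_entry_map[OF \<open>x < n\<close> \<open>y < n\<close>, of k] t by simp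
  qed
  have "inj_on fst ?S"
    by (rule inj_onI) (metis snd_eq prod.expand)
  moreover have "fst ` ?S \<subseteq> points_on_cycles d" by (auto simp: closed_entries_def)
  moreover have "finite (points_on_cycles d)" by (simp add: points_on_cycles_def)
  ultimately show ?thesis by (simp add: card_inj_on_le)
qed

lemma card_closed_entries:
  assumes "0 < d"
  obtains q e where "card (closed_entries d) = 3 * d * q + d * e"
    and "d * e \<le> card (points_on_cycles d)" and "3 dvd d \<Longrightarrow> e = 0"
proof -
  let ?E = "closed_entries d"
  let ?orbits = "\<lambda>N. {orbit entry_map t | t. t \<in> ?E \<and> card (orbit entry_map t) = N}"
  have "finite ?E"
    using closed_entries_subset by (rule finite_subset) simp
  have count: "card {t \<in> ?E. card (orbit entry_map t) = N} = N * card (?orbits N)" for N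
  proof (rule card_points_on_orbits_of_card)
    show "entry_map ` ?E \<subseteq> ?E" using entry_map_closed_entries by auto
  qed (use \<open>finite ?E\<close> in_orbit_entry_map assms in auto)
  let ?long = "{t \<in> ?E. card (orbit entry_map t) = 3 * d}"
  let ?short = "{t \<in> ?E. card (orbit entry_map t) = d}"
  have "?E = ?long \<union> ?short"
    using card_orbit_entry_map assms by auto
  then have "card ?E = card (?long \<union> ?short)" by (rule arg_cong)
  also have "\<dots> = card ?long + card ?short"
    by (rule card_Un_disjoint) (use \<open>finite ?E\<close> assms in auto)
  finally have card_E: "card ?E = 3 * d * card (?orbits (3 * d)) + d * card (?orbits d)"
    unfolding count .
  have no_short: "?orbits d = {}" if "3 dvd d"
    using card_orbit_entry_map_neq_if_3_dvd[OF _ assms that] by blast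
  show thesis
  proof (rule that[OF card_E])
    show "d * card (?orbits d) \<le> card (points_on_cycles d)"
    proof (cases "3 dvd d")
      case True
      then show ?thesis unfolding no_short[OF True] by simp
    next
      case False
      then show ?thesis using card_short_orbit_entries_le[OF False] unfolding count by simp
    qed
    show "card (?orbits d) = 0" if "3 dvd d" unfolding no_short[OF that] by simp
  qed
qed

end

lemma closed_entries_count_impossible:
  fixes n d r q e :: nat
  assumes "0 < d" "d * r \<le> n"
    and count: "3 * d * q + d * e + d * r * (n - d * r) = d * r * (d * r)"
    and "d * e \<le> d * r" and "3 dvd d \<Longrightarrow> e = 0"
    and "(r = 1 \<and> (n + d) mod 3 = 1) \<or> (3 dvd d \<and> \<not> 3 dvd (n * r))"
  shows False
proof -
  have "d * (3 * q + e + r * (n - d * r)) = d * (r * (d * r))"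
    using count by (simp add: algebra_simps)
  then have eq: "3 * q + e + r * (n - d * r) = r * (d * r)"
    using assms(1) by simp
  from assms(6) show False
  proof
    assume "r = 1 \<and> (n + d) mod 3 = 1"
    moreover have "e \<le> 1" using assms(1,4) calculation by simp
    ultimately show False using eq assms(2) by presburger
  next
    assume case_ii: "3 dvd d \<and> \<not> 3 dvd (n * r)"
    then obtain s where "d = 3 * s" by blast
    have "int (3 * q + r * (n - d * r)) = int (r * (d * r))"
      using eq assms(5) case_ii by simp
    then have "int (n * r) = 3 * (2 * int s * int r * int r - int q)"
      using assms(2) \<open>d = 3 * s\<close> by (simp add: of_nat_diff algebra_simps)
    then have "3 dvd n * r" by presburger
    then show False using case_ii by simp
  qed
qed

theorem theorem5p1:
  fixes n d :: nat and \<gamma> :: "nat \<Rightarrow> nat"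
  assumes "\<gamma> permutes {..<n}"
    and "d > 0"
    and "\<not> (\<exists>d' \<in> cycle_lengths n \<gamma>. \<exists>d'' \<in> cycle_lengths n \<gamma>.
             d \<notin> {d', d''} \<and> lcm d d' = lcm d d'' \<and> lcm d d'' = lcm d' d'')"
    and "(num_cycles_of_length n \<gamma> d = 1 \<and> (n + d) mod 3 = 1) \<or>
         (3 dvd d \<and> \<not> 3 dvd (n * num_cycles_of_length n \<gamma> d))"
  shows "\<not> in_Par123 n id id \<gamma>"
proof
  assume "in_Par123 n id id \<gamma>"
  then obtain L where "latin_square n L" "is_autoparatopism123 n id id \<gamma> L"
    unfolding in_Par123_def by blast
  then interpret autoparatopic_latin_square n \<gamma> L
    using assms(1) autoparatopic_latin_squareI by blast
  let ?P = "points_on_cycles d" and ?r = "num_cycles_of_length n \<gamma> d"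
  have "card (closed_entries d) + card ?P * (n - card ?P) = card ?P * card ?P"
    unfolding closed_entries_def
    using latin_square_card_closed_entries[OF latin points_on_cycles_subset]
      L_in_points_on_cycles[OF assms(3)] by blast
  moreover obtain q e where "card (closed_entries d) = 3 * d * q + d * e"
    and "d * e \<le> card ?P" and "3 dvd d \<Longrightarrow> e = 0"
    using card_closed_entries assms(2) by blast
  moreover have "card ?P = d * ?r" by (rule card_points_on_cycles)
  moreover have "card ?P \<le> n"
    using card_mono[OF finite_lessThan points_on_cycles_subset] by simp
  ultimately show False
    using closed_entries_count_impossible[of d ?r n q e] assms(2,4) by simp
qed

end
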